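(* For all bases $\Gamma$, name contexts $\Delta$, names $\alpha,\beta$, terms $M$ and $\kappa,\kappa'\in\Lambda_C$: (1) if $\Gamma\vdash M:\kappa\to\psi\mid\alpha{:}\kappa,\Delta$ is derivable, then $\Gamma\vdash\mu\alpha.[\alpha]M:\kappa\to\psi\mid\Delta$ is derivable; (2) if $\Gamma\vdash M:\kappa'\to\psi\mid\alpha{:}\kappa,\beta{:}\kappa',\Delta$ is derivable, then $\Gamma\vdash\mu\alpha.[\beta]M:\kappa\to\psi\mid\beta{:}\kappa',\Delta$ is derivable. The same holds in the restricted system $\vdash_r$ (with all types, bases and contexts restricted).
   Context: $\lambda\mu$ terms and commands: $M::=x\mid\lambda x.M\mid MN\mid\mu\alpha.\mathsf C$ and $\mathsf C::=[\alpha]M$. Types. $R=\{\bot\sqsubset\top\}$ and $\psi=\psi_\top$. - $\Lambda_R$: $\rho::=\psi_a\mid\omega\mid\rho\wedge\rho$; - $\Lambda_D$: $\delta::=\rho\mid\kappa\to\rho\mid\omega\mid\delta\wedge\delta$; - $\Lambda_C$: $\kappa::=\delta\times\kappa\mid\omega\mid\kappa\wedge\kappa$. The relations $\le_R,\le_D,\le_C$ are the least reflexive, transitive relations with $\sigma\wedge\tau\le\sigma,\tau$, $\sigma\le\omega$, $\rho\le\sigma,\tau\Rightarrow\rho\le\sigma\wedge\tau$, and additionally: - $\psi_\bot\sim\omega$ and $\psi_{a\sqcup b}\sim\psi_a\wedge\psi_b$; - $\le_R\subseteq\le_D$; - $\omega\le_D\omega\to\omega$; - $\psi_a\le_D\omega\to\psi_a\le_D\psi_a$;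 - $\omega\le_C\omega\times\omega$; - $(\kappa\to\rho_1)\wedge(\kappa\to\rho_2)\le_D\kappa\to(\rho_1\wedge\rho_2)$; - $(\delta_1\times\kappa_1)\wedge(\delta_2\times\kappa_2)\le_C(\delta_1\wedge\delta_2)\times(\kappa_1\wedge\kappa_2)$; - $\to$ is contravariant in $\Lambda_C$ and covariant in $\Lambda_R$; - $\times$ is covariant in both arguments. Type assignment. Bases $\Gamma$ are finite maps from variables to $\Lambda_D$, and contexts $\Delta$ are finite maps from names to $\Lambda_C$. $\Gamma(x)$ and $\Delta(\alpha)$ are $\omega$ outside the domain. $\alpha{:}\kappa,\Delta$ is $\Delta\cup\{\alpha{:}\kappa\}$ (requiring $\alpha\notin\mathrm{dom}\Delta$ or $\alpha{:}\kappa\in\Delta$). The rules are: - (Ax) $\Gamma,x{:}\delta\vdash x:\delta\mid\Delta$. - (Abs) From $\Gamma\vdash M:\kappa\to\rho\mid\Delta$, $\Gamma(x)=\delta$, infer $\Gamma\setminus x\vdash\lambda x.M:(\delta\times\kappa)\to\rho\mid\Delta$. - (App) From $\Gamma\vdash M:(\delta\times\kappa)\to\rho\mid\Delta$ and $\Gamma\vdash N:\delta\mid\Delta$, infer $\Gamma\vdash MN:\kappa\to\rho\mid\Delta$. - (Cmd) From $\Gamma\vdash M:\delta\mid\Delta$, $\Delta(\alpha)=\kappa$, infer $\Gamma\vdash[\alpha]M:\delta\times\kappa\mid\Delta$. - ($\mu$) From $\Gamma\vdash\mathsf C:(\kappa'\to\rho)\times\kappa'\mid\Delta$, $\Delta(\alpha)=\kappa$,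 infer $\Gamma\vdash\mu\alpha.\mathsf C:\kappa\to\rho\mid\Delta\setminus\alpha$. - ($\wedge$), ($\omega$) and ($\le$). Restricted system. $\Lambda^r_D$: $\delta::=\kappa\to\psi\mid\delta\wedge\delta$; $\Lambda^r_C$: $\kappa::=\omega\mid\delta\times\kappa\mid\kappa\wedge\kappa$. $\vdash_r$ denotes derivability without ($\omega$), with every judgement having a basis valued in $\Lambda^r_D$, a context valued in $\Lambda^r_C$, and a predicate in $\Lambda^r_D\cup\Lambda^r_C$. *)

theory Defs
  imports Main
begin

type_synonym var = nat
type_synonym name = nat

datatype trm = Var var | Lam var trm | App trm trm | Mu name cmd
     and cmd = Cmd name trm

text \<open>R = {bot < top} is represented by bool (False = bot, True = top, join = disj).
  One datatype carries all three sorts; sort membership is given by predicates.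
  Arr k r is k -> r, Prod d k is d x k.\<close>

datatype ty = Psi bool | Omega | And ty ty | Arr ty ty | Prod ty ty

abbreviation psi :: ty where "psi \<equiv> Psi True"

fun isR :: "ty \<Rightarrow> bool" where
  "isR (Psi a) = True"
| "isR Omega = True"
| "isR (And s t) = (isR s \<and> isR t)"
| "isR (Arr _ _) = False"
| "isR (Prod _ _) = False"

fun isD :: "ty \<Rightarrow> bool" and isC :: "ty \<Rightarrow> bool" where
  "isD (Psi a) = True"
| "isD Omega = True"
| "isD (And s t) = (isD s \<and> isD t)"
| "isD (Arr k r) = (isC k \<and> isR r)"
| "isD (Prod _ _) = False"
| "isC (Psi _) = False"
| "isC Omega = True"
| "isC (And s t) = (isC s \<and> isC t)"
| "isC (Arr _ _) = False"
| "isC (Prod d k) = (isD d \<and> isC k)"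

fun isDr :: "ty \<Rightarrow> bool" and isCr :: "ty \<Rightarrow> bool" where
  "isDr (Psi a) = False"
| "isDr Omega = False"
| "isDr (And s t) = (isDr s \<and> isDr t)"
| "isDr (Arr k r) = (isCr k \<and> r = psi)"
| "isDr (Prod _ _) = False"
| "isCr (Psi _) = False"
| "isCr Omega = True"
| "isCr (And s t) = (isCr s \<and> isCr t)"
| "isCr (Arr _ _) = False"
| "isCr (Prod d k) = (isDr d \<and> isCr k)"

inductive leR :: "ty \<Rightarrow> ty \<Rightarrow> bool" where
  R_refl: "isR s \<Longrightarrow> leR s s"
| R_trans: "leR s t \<Longrightarrow> leR t u \<Longrightarrow> leR s u"
| R_andL: "isR s \<Longrightarrow> isR t \<Longrightarrow> leR (And s t) s"
| R_andR: "isR s \<Longrightarrow> isR t \<Longrightarrow> leR (And s t) t"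
| R_top: "isR s \<Longrightarrow> leR s Omega"
| R_glb: "leR r s \<Longrightarrow> leR r t \<Longrightarrow> leR r (And s t)"
| R_bot1: "leR (Psi False) Omega"
| R_bot2: "leR Omega (Psi False)"
| R_join1: "leR (Psi (a \<or> b)) (And (Psi a) (Psi b))"
| R_join2: "leR (And (Psi a) (Psi b)) (Psi (a \<or> b))"

inductive leD :: "ty \<Rightarrow> ty \<Rightarrow> bool" and leC :: "ty \<Rightarrow> ty \<Rightarrow> bool" where
  D_refl: "isD s \<Longrightarrow> leD s s"
| D_trans: "leD s t \<Longrightarrow> leD t u \<Longrightarrow> leD s u"
| D_andL: "isD s \<Longrightarrow> isD t \<Longrightarrow> leD (And s t) s"
| D_andR: "isD s \<Longrightarrow> isD t \<Longrightarrow> leD (And s t) t"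
| D_top: "isD s \<Longrightarrow> leD s Omega"
| D_glb: "leD r s \<Longrightarrow> leD r t \<Longrightarrow> leD r (And s t)"
| D_R: "leR s t \<Longrightarrow> leD s t"
| D_omega: "leD Omega (Arr Omega Omega)"
| D_psi1: "leD (Psi a) (Arr Omega (Psi a))"
| D_psi2: "leD (Arr Omega (Psi a)) (Psi a)"
| D_arr_and: "isC k \<Longrightarrow> isR r1 \<Longrightarrow> isR r2 \<Longrightarrow>
     leD (And (Arr k r1) (Arr k r2)) (Arr k (And r1 r2))"
| D_arr: "leC k' k \<Longrightarrow> leR r r' \<Longrightarrow> leD (Arr k r) (Arr k' r')"
| C_refl: "isC s \<Longrightarrow> leC s s"
| C_trans: "leC s t \<Longrightarrow> leC t u \<Longrightarrow> leC s u"
| C_andL: "isC s \<Longrightarrow> isC t \<Longrightarrow> leC (And s t) s"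
| C_andR: "isC s \<Longrightarrow> isC t \<Longrightarrow> leC (And s t) t"
| C_top: "isC s \<Longrightarrow> leC s Omega"
| C_glb: "leC r s \<Longrightarrow> leC r t \<Longrightarrow> leC r (And s t)"
| C_omega: "leC Omega (Prod Omega Omega)"
| C_prod_and: "isD d1 \<Longrightarrow> isD d2 \<Longrightarrow> isC k1 \<Longrightarrow> isC k2 \<Longrightarrow>
     leC (And (Prod d1 k1) (Prod d2 k2)) (Prod (And d1 d2) (And k1 k2))"
| C_prod: "leD d d' \<Longrightarrow> leC k k' \<Longrightarrow> leC (Prod d k) (Prod d' k')"

text \<open>The boolean parameter rs selects the system: rs = False is the full system,
  rs = True the restricted system (restricted sorts, no omega rule).\<close>

definition sD :: "bool \<Rightarrow> ty \<Rightarrow> bool" where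
  "sD rs = (if rs then isDr else isD)"

definition sC :: "bool \<Rightarrow> ty \<Rightarrow> bool" where
  "sC rs = (if rs then isCr else isC)"

type_synonym basis = "var \<rightharpoonup> ty"
type_synonym ctxt = "name \<rightharpoonup> ty"

definition wfB :: "bool \<Rightarrow> basis \<Rightarrow> bool" where
  "wfB rs \<Gamma> \<longleftrightarrow> finite (dom \<Gamma>) \<and> (\<forall>d\<in>ran \<Gamma>. sD rs d)"

definition wfC :: "bool \<Rightarrow> ctxt \<Rightarrow> bool" where
  "wfC rs \<Delta> \<longleftrightarrow> finite (dom \<Delta>) \<and> (\<forall>k\<in>ran \<Delta>. sC rs k)"

definition look :: "('a \<rightharpoonup> ty) \<Rightarrow> 'a \<Rightarrow> ty" where
  "look m a = (case m a of None \<Rightarrow> Omega | Some t \<Rightarrow> t)"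

definition okT :: "bool \<Rightarrow> basis \<Rightarrow> ty \<Rightarrow> ctxt \<Rightarrow> bool" where
  "okT rs \<Gamma> s \<Delta> \<longleftrightarrow> wfB rs \<Gamma> \<and> wfC rs \<Delta> \<and> sD rs s"

definition okC :: "bool \<Rightarrow> basis \<Rightarrow> ty \<Rightarrow> ctxt \<Rightarrow> bool" where
  "okC rs \<Gamma> s \<Delta> \<longleftrightarrow> wfB rs \<Gamma> \<and> wfC rs \<Delta> \<and> sC rs s"

inductive tm :: "bool \<Rightarrow> basis \<Rightarrow> trm \<Rightarrow> ty \<Rightarrow> ctxt \<Rightarrow> bool"
      and cm :: "bool \<Rightarrow> basis \<Rightarrow> cmd \<Rightarrow> ty \<Rightarrow> ctxt \<Rightarrow> bool"
  for rs :: bool where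
  Ax: "\<Gamma> x = Some d \<Longrightarrow> okT rs \<Gamma> d \<Delta> \<Longrightarrow> tm rs \<Gamma> (Var x) d \<Delta>"
| Abs: "tm rs \<Gamma> M (Arr k r) \<Delta> \<Longrightarrow> look \<Gamma> x = d \<Longrightarrow>
        okT rs (\<Gamma>(x := None)) (Arr (Prod d k) r) \<Delta> \<Longrightarrow>
        tm rs (\<Gamma>(x := None)) (Lam x M) (Arr (Prod d k) r) \<Delta>"
| App: "tm rs \<Gamma> M (Arr (Prod d k) r) \<Delta> \<Longrightarrow> tm rs \<Gamma> N d \<Delta> \<Longrightarrow>
        okT rs \<Gamma> (Arr k r) \<Delta> \<Longrightarrow> tm rs \<Gamma> (App M N) (Arr k r) \<Delta>"
| Cmd: "tm rs \<Gamma> M d \<Delta> \<Longrightarrow> look \<Delta> \<alpha> = k \<Longrightarrow>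
        okC rs \<Gamma> (Prod d k) \<Delta> \<Longrightarrow> cm rs \<Gamma> (Cmd \<alpha> M) (Prod d k) \<Delta>"
| MuR: "cm rs \<Gamma> C (Prod (Arr k' r) k') \<Delta> \<Longrightarrow> look \<Delta> \<alpha> = k \<Longrightarrow>
        okT rs \<Gamma> (Arr k r) (\<Delta>(\<alpha> := None)) \<Longrightarrow>
        tm rs \<Gamma> (Mu \<alpha> C) (Arr k r) (\<Delta>(\<alpha> := None))"
| AndT: "tm rs \<Gamma> M s \<Delta> \<Longrightarrow> tm rs \<Gamma> M t \<Delta> \<Longrightarrow> okT rs \<Gamma> (And s t) \<Delta> \<Longrightarrow>
        tm rs \<Gamma> M (And s t) \<Delta>"
| OmegaT: "\<not> rs \<Longrightarrow> okT rs \<Gamma> Omega \<Delta> \<Longrightarrow> tm rs \<Gamma> M Omega \<Delta>"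
| LeT: "tm rs \<Gamma> M s \<Delta> \<Longrightarrow> leD s t \<Longrightarrow> okT rs \<Gamma> t \<Delta> \<Longrightarrow> tm rs \<Gamma> M t \<Delta>"
| AndC: "cm rs \<Gamma> C s \<Delta> \<Longrightarrow> cm rs \<Gamma> C t \<Delta> \<Longrightarrow> okC rs \<Gamma> (And s t) \<Delta> \<Longrightarrow>
        cm rs \<Gamma> C (And s t) \<Delta>"
| OmegaC: "\<not> rs \<Longrightarrow> okC rs \<Gamma> Omega \<Delta> \<Longrightarrow> cm rs \<Gamma> C Omega \<Delta>"
| LeC: "cm rs \<Gamma> C s \<Delta> \<Longrightarrow> leC s t \<Longrightarrow> okC rs \<Gamma> t \<Delta> \<Longrightarrow> cm rs \<Gamma> C t \<Delta>"

end

theory Submission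
  imports Defs
begin

lemma sC_look: "wfC rs \<Delta> \<Longrightarrow> sC rs (look \<Delta> a)"
  by (cases rs) (auto simp: wfC_def look_def sC_def ran_def split: option.split)

lemma wfC_upd: "wfC rs \<Delta> \<Longrightarrow> sC rs k \<Longrightarrow> wfC rs (\<Delta>(a \<mapsto> k))"
  unfolding wfC_def by (auto simp: ran_def)

lemma wfC_delete: "wfC rs \<Delta> \<Longrightarrow> wfC rs (\<Delta>(a := None))"
  unfolding wfC_def by (auto simp: ran_def)

lemma sorts_Arr_psi: "sC rs k \<Longrightarrow> sD rs (Arr k psi) \<and> sC rs (Prod (Arr k psi) k)"
  by (cases rs) (auto simp: sC_def sD_def)

lemma tm_Mu_Cmd:
  assumes M: "tm rs \<Gamma> M (Arr (look \<Delta> \<beta>) psi) \<Delta>"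
    and \<Gamma>: "wfB rs \<Gamma>" and \<Delta>: "wfC rs \<Delta>"
  shows "tm rs \<Gamma> (Mu \<alpha> (Cmd \<beta> M)) (Arr (look \<Delta> \<alpha>) psi) (\<Delta>(\<alpha> := None))"
proof (rule MuR)
  show "cm rs \<Gamma> (Cmd \<beta> M) (Prod (Arr (look \<Delta> \<beta>) psi) (look \<Delta> \<beta>)) \<Delta>"
    using M \<Gamma> \<Delta> sorts_Arr_psi[OF sC_look[OF \<Delta>]] by (auto intro: Cmd simp: okC_def)
  show "okT rs \<Gamma> (Arr (look \<Delta> \<alpha>) psi) (\<Delta>(\<alpha> := None))"
    using \<Gamma> wfC_delete[OF \<Delta>] sorts_Arr_psi[OF sC_look[OF \<Delta>]] by (simp add: okT_def)
qed simp

theorem lemma7p2: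
  fixes rs :: bool and \<Gamma> :: basis and \<Delta> :: ctxt and \<alpha> \<beta> :: name
    and M :: trm and \<kappa> \<kappa>' :: ty
  assumes "wfB rs \<Gamma>" and "wfC rs \<Delta>" and "sC rs \<kappa>" and "sC rs \<kappa>'"
  shows "(\<alpha> \<notin> dom \<Delta> \<and> tm rs \<Gamma> M (Arr \<kappa> psi) (\<Delta>(\<alpha> \<mapsto> \<kappa>))
            \<longrightarrow> tm rs \<Gamma> (Mu \<alpha> (Cmd \<alpha> M)) (Arr \<kappa> psi) \<Delta>)
       \<and> (\<alpha> \<notin> dom \<Delta> \<and> \<alpha> \<noteq> \<beta> \<and> (\<beta> \<notin> dom \<Delta> \<or> \<Delta> \<beta> = Some \<kappa>')
            \<and> tm rs \<Gamma> M (Arr \<kappa>' psi) (\<Delta>(\<beta> \<mapsto> \<kappa>', \<alpha> \<mapsto> \<kappa>))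
            \<longrightarrow> tm rs \<Gamma> (Mu \<alpha> (Cmd \<beta> M)) (Arr \<kappa> psi) (\<Delta>(\<beta> \<mapsto> \<kappa>')))"
proof (intro conjI impI; elim conjE)
  assume \<alpha>: "\<alpha> \<notin> dom \<Delta>" and M: "tm rs \<Gamma> M (Arr \<kappa> psi) (\<Delta>(\<alpha> \<mapsto> \<kappa>))"
  have "tm rs \<Gamma> (Mu \<alpha> (Cmd \<alpha> M)) (Arr \<kappa> psi) ((\<Delta>(\<alpha> \<mapsto> \<kappa>))(\<alpha> := None))"
    using tm_Mu_Cmd[of rs \<Gamma> M "\<Delta>(\<alpha> \<mapsto> \<kappa>)" \<alpha> \<alpha>] M assms wfC_upd
    by (simp add: look_def)
  moreover have "(\<Delta>(\<alpha> \<mapsto> \<kappa>))(\<alpha> := None) = \<Delta>"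
    using \<alpha> by (auto simp: domIff)
  ultimately show "tm rs \<Gamma> (Mu \<alpha> (Cmd \<alpha> M)) (Arr \<kappa> psi) \<Delta>" by simp
next
  \<comment> \<open>The hypothesis on \<open>\<Delta> \<beta>\<close> only makes \<open>\<beta>{:}\<kappa>',\<Delta>\<close> well-formed; the derivation does not need it.\<close>
  assume \<alpha>: "\<alpha> \<notin> dom \<Delta>" and \<alpha>\<beta>: "\<alpha> \<noteq> \<beta>"
    and M: "tm rs \<Gamma> M (Arr \<kappa>' psi) (\<Delta>(\<beta> \<mapsto> \<kappa>', \<alpha> \<mapsto> \<kappa>))"
  have "wfC rs (\<Delta>(\<beta> \<mapsto> \<kappa>', \<alpha> \<mapsto> \<kappa>))"
    using assms by (simp add: wfC_upd)
  then have "tm rs \<Gamma> (Mu \<alpha> (Cmd \<beta> M)) (Arr \<kappa> psi) ((\<Delta>(\<beta> \<mapsto> \<kappa>', \<alpha> \<mapsto> \<kappa>))(\<alpha> := None))"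
    using tm_Mu_Cmd[of rs \<Gamma> M "\<Delta>(\<beta> \<mapsto> \<kappa>', \<alpha> \<mapsto> \<kappa>)" \<beta> \<alpha>] M \<alpha>\<beta> assms(1)
    by (simp add: look_def)
  moreover have "(\<Delta>(\<beta> \<mapsto> \<kappa>', \<alpha> \<mapsto> \<kappa>))(\<alpha> := None) = \<Delta>(\<beta> \<mapsto> \<kappa>')"
    using \<alpha> \<alpha>\<beta> by (auto simp: domIff fun_eq_iff)
  ultimately show "tm rs \<Gamma> (Mu \<alpha> (Cmd \<beta> M)) (Arr \<kappa> psi) (\<Delta>(\<beta> \<mapsto> \<kappa>'))" by simp
qed

end
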